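(* Fix $I_{12},I_{23},I_{31}\in[0,\infty)$. For $(u_1,u_2,u_3)\in\mathcal{U}_E^{123}$, let $\alpha_1,\alpha_2,\alpha_3$ be the inner angles, opposite to sides $l_1,l_2,l_3$ respectively, of the Euclidean triangle with side lengths $l_1,l_2,l_3$. Then at every point of $\mathcal{U}_E^{123}$, the Jacobian matrix $\left(\partial\alpha_i/\partial u_j\right)_{i,j=1}^3$ has: - a zero eigenvalue with eigenvector $(1,1,1)$, and - two negative eigenvalues. In particular, it is negative semi-definite with kernel spanned by $(1,1,1)$.
   Context: Put $r_i=e^{u_i}$ for $i=1,2,3$, and $$l_1^2=r_2^2+r_3^2+2I_{23}r_2r_3,\quad l_2^2=r_3^2+r_1^2+2I_{31}r_3r_1,\quad l_3^2=r_1^2+r_2^2+2I_{12}r_1r_2,$$ with $l_i>0$. The set $\mathcal{U}_E^{123}\subset\mathbb{R}^3$ is the set of $(u_1,u_2,u_3)$ for which $l_1,l_2,l_3$ satisfy the strict triangle inequalities. The Jacobian matrix $\left(\partial\alpha_i/\partial u_j\right)$ is symmetric. *)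

theory Defs
  imports "HOL-Analysis.Derivative" "Jordan_Normal_Form.Char_Poly"
begin

text \<open>Indices are shifted to 0,1,2 (standing for 1,2,3). A point of R^3 is
  represented by u :: nat => real, only u 0, u 1, u 2 being relevant.\<close>

definition edge_len :: "real \<Rightarrow> real \<Rightarrow> real \<Rightarrow> (nat \<Rightarrow> real) \<Rightarrow> nat \<Rightarrow> real" where
  "edge_len I12 I23 I31 u i =
     (let r = (\<lambda>k. exp (u k)) in
      if i = 0 then sqrt ((r 1)\<^sup>2 + (r 2)\<^sup>2 + 2 * I23 * r 1 * r 2)
      else if i = 1 then sqrt ((r 2)\<^sup>2 + (r 0)\<^sup>2 + 2 * I31 * r 2 * r 0)
      else sqrt ((r 0)\<^sup>2 + (r 1)\<^sup>2 + 2 * I12 * r 0 * r 1))"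

definition U_E :: "real \<Rightarrow> real \<Rightarrow> real \<Rightarrow> (nat \<Rightarrow> real) set" where
  "U_E I12 I23 I31 = {u. let l = edge_len I12 I23 I31 u in
      l 0 > 0 \<and> l 1 > 0 \<and> l 2 > 0 \<and>
      l 0 < l 1 + l 2 \<and> l 1 < l 2 + l 0 \<and> l 2 < l 0 + l 1}"

definition tri_angle :: "real \<Rightarrow> real \<Rightarrow> real \<Rightarrow> (nat \<Rightarrow> real) \<Rightarrow> nat \<Rightarrow> real" where
  "tri_angle I12 I23 I31 u i =
     (let l = edge_len I12 I23 I31 u; j = (i + 1) mod 3; k = (i + 2) mod 3 in
      arccos (((l j)\<^sup>2 + (l k)\<^sup>2 - (l i)\<^sup>2) / (2 * l j * l k)))"

definition angle_jacobian :: "real \<Rightarrow> real \<Rightarrow> real \<Rightarrow> (nat \<Rightarrow> real) \<Rightarrow> real mat" where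
  "angle_jacobian I12 I23 I31 u =
     mat 3 3 (\<lambda>(i, j). deriv (\<lambda>t. tri_angle I12 I23 I31 (u(j := t)) i) (u j))"

end

theory Submission
  imports Defs
begin

text \<open>With \<open>r\<^sub>i = exp u\<^sub>i\<close> and squared side lengths \<open>L\<^sub>i = l\<^sub>i\<^sup>2\<close>, differentiating the law
  of cosines shows that the Jacobian is a negated weighted Laplacian of the triangle:
  \<open>\<partial>\<alpha>\<^sub>i/\<partial>u\<^sub>j = w\<^sub>k\<close> for \<open>{i,j,k} = {1,2,3}\<close> and \<open>\<partial>\<alpha>\<^sub>i/\<partial>u\<^sub>i = -(w\<^sub>j + w\<^sub>k)\<close>.
  Such a matrix annihilates \<open>(1,1,1)\<close>, its quadratic form is
  \<open>-(w\<^sub>3(x\<^sub>1-x\<^sub>2)\<^sup>2 + w\<^sub>2(x\<^sub>1-x\<^sub>3)\<^sup>2 + w\<^sub>1(x\<^sub>2-x\<^sub>3)\<^sup>2)\<close>, and its characteristic polynomial is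
  \<open>x(x\<^sup>2 + 2\<sigma>\<^sub>1x + 3\<sigma>\<^sub>2)\<close> with \<open>\<sigma>\<^sub>1, \<sigma>\<^sub>2\<close> the elementary symmetric functions of the weights.
  So everything follows from \<open>\<sigma>\<^sub>1 > 0\<close> and \<open>\<sigma>\<^sub>2 > 0\<close>. The polynomial \<open>\<sigma>\<^sub>2\<close> factors as a
  positive expression times Heron's \<open>16 Area\<^sup>2\<close>, which is positive by the triangle inequalities;
  and when all \<open>I\<^sub>i\<^sub>j \<ge> 0\<close> no two weights can be nonpositive, which together with \<open>\<sigma>\<^sub>2 > 0\<close>
  forces \<open>\<sigma>\<^sub>1 > 0\<close>.\<close>

section \<open>The weighted Laplacian of a triangle\<close>

lemma less_3_cases: "(i::nat) < 3 \<Longrightarrow> i = 0 \<or> i = 1 \<or> i = 2"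
  by auto

lemma sum_atLeast0_lessThan_3: "(\<Sum>i\<in>{0..<3::nat}. f i) = f 0 + f 1 + (f 2 :: 'a::comm_monoid_add)"
  by (simp add: numeral_3_eq_3 numeral_2_eq_2 add.assoc)

lemma det_2x2:
  fixes A :: "'a::comm_ring_1 mat"
  assumes A: "A \<in> carrier_mat 2 2"
  shows "det A = A $$ (0,0) * A $$ (1,1) - A $$ (0,1) * A $$ (1,0)"
proof -
  have "det A = (\<Sum>j<2. A $$ (0,j) * cofactor A 0 j)"
    by (rule laplace_expansion_row[OF A]) auto
  also have "\<dots> = A $$ (0,0) * A $$ (1,1) - A $$ (0,1) * A $$ (1,0)"
    using A by (simp add: numeral_2_eq_2 cofactor_def det_single mat_delete_def)
  finally show ?thesis .
qed

lemma det_3x3: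
  fixes A :: "'a::comm_ring_1 mat"
  assumes A: "A \<in> carrier_mat 3 3"
  shows "det A = A $$ (0,0) * (A $$ (1,1) * A $$ (2,2) - A $$ (1,2) * A $$ (2,1))
     - A $$ (0,1) * (A $$ (1,0) * A $$ (2,2) - A $$ (1,2) * A $$ (2,0))
     + A $$ (0,2) * (A $$ (1,0) * A $$ (2,1) - A $$ (1,1) * A $$ (2,0))" (is "_ = ?rhs")
proof -
  have minor: "\<And>i j. mat_delete A i j \<in> carrier_mat 2 2"
    using mat_delete_carrier[OF A] by simp
  have "det A = (\<Sum>j<3. A $$ (0,j) * cofactor A 0 j)"
    by (rule laplace_expansion_row[OF A]) auto
  also have "\<dots> = A $$ (0,0) * cofactor A 0 0 + A $$ (0,1) * cofactor A 0 1 + A $$ (0,2) * cofactor A 0 2"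
    by (simp add: numeral_3_eq_3 numeral_2_eq_2)
  also have "\<dots> = ?rhs"
    unfolding cofactor_def using A
    by (simp add: det_2x2[OF minor] mat_delete_index del: mat_delete_carrier,
        simp add: mat_delete_def, simp add: algebra_simps numeral_2_eq_2)
  finally show ?thesis .
qed

lemma mult_mat_vec_3x3:
  fixes A :: "'a::comm_semiring_0 mat"
  assumes "A \<in> carrier_mat 3 3" and "v \<in> carrier_vec 3"
  shows "A *\<^sub>v v = Matrix.vec 3 (\<lambda>i. A $$ (i,0) * vec_index v 0 + A $$ (i,1) * vec_index v 1
                                   + A $$ (i,2) * vec_index v 2)"
  using assms by (intro eq_vecI) (auto simp: mult_mat_vec_def scalar_prod_def sum_atLeast0_lessThan_3)

lemma weighted_squares_pos:
  fixes x y z a b :: real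
  assumes sigma2: "x * y + y * z + z * x > 0" and sigma1: "x + y + z > 0"
    and nonzero: "a \<noteq> 0 \<or> b \<noteq> 0"
  shows "x * a\<^sup>2 + y * b\<^sup>2 + z * (b - a)\<^sup>2 > 0"
proof -
  have xz: "x + z > 0"
    using sigma1 sigma2 by (smt (verit) mult.commute distrib_left zero_less_mult_iff)
  have "(x + z) * (x * a\<^sup>2 + y * b\<^sup>2 + z * (b - a)\<^sup>2) = ((x + z) * a - z * b)\<^sup>2 + (x * y + y * z + z * x) * b\<^sup>2"
    by (simp add: power2_eq_square algebra_simps)
  also have "\<dots> > 0"
  proof (cases "b = 0")
    case True
    then show ?thesis using nonzero xz by simp
  next
    case False
    then show ?thesis using sigma2 by (intro add_nonneg_pos) auto
  qed
  finally show ?thesis using xz by (simp add: zero_less_mult_iff)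
qed

lemma quadratic_neg_roots:
  fixes p s :: real
  assumes "0 < p" and "0 < s" and "p \<le> s\<^sup>2"
  shows "\<exists>a b. a < 0 \<and> b < 0 \<and> [:p, 2 * s, 1:] = [:- a, 1:] * [:- b, 1:]"
proof -
  define d where "d = sqrt (s\<^sup>2 - p)"
  have d: "d \<ge> 0" "d\<^sup>2 = s\<^sup>2 - p"
    using assms(3) by (simp_all add: d_def)
  then have "d < s"
    using assms(1,2) by (intro power2_less_imp_less[of d s]) auto
  moreover have "[:p, 2 * s, 1:] = [:- (d - s), 1:] * [:- (- d - s), 1:]"
    using d(2) by (simp add: power2_eq_square algebra_simps)
  ultimately show ?thesis
    using d(1) assms(2) by (intro exI[of _ "d - s"] exI[of _ "- d - s"]) auto
qed

text \<open>\<open>w k\<close> is the weight of the edge opposite vertex \<open>k\<close>; for \<open>i \<noteq> j\<close> the third index is \<open>3 - i - j\<close>.\<close>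

definition tri_laplacian :: "(nat \<Rightarrow> real) \<Rightarrow> real mat" where
  "tri_laplacian w = mat 3 3 (\<lambda>(i, j).
     if i = j then - (w ((i + 1) mod 3) + w ((i + 2) mod 3)) else w (3 - i - j))"

lemma tri_laplacian_carrier: "tri_laplacian w \<in> carrier_mat 3 3"
  by (simp add: tri_laplacian_def)

lemma tri_laplacian_index:
  "tri_laplacian w $$ (0,0) = - (w 1 + w 2)" "tri_laplacian w $$ (0,1) = w 2"
  "tri_laplacian w $$ (0,2) = w 1" "tri_laplacian w $$ (1,0) = w 2"
  "tri_laplacian w $$ (1,1) = - (w 2 + w 0)" "tri_laplacian w $$ (1,2) = w 0"
  "tri_laplacian w $$ (2,0) = w 1" "tri_laplacian w $$ (2,1) = w 0"
  "tri_laplacian w $$ (2,2) = - (w 0 + w 1)"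
  by (simp_all add: tri_laplacian_def numeral_2_eq_2)

lemmas tri_laplacian_mult_vec = mult_mat_vec_3x3[OF tri_laplacian_carrier]

lemma tri_laplacian_quadratic_form:
  assumes "v \<in> carrier_vec 3"
  shows "v \<bullet> (tri_laplacian w *\<^sub>v v) =
    - (w 2 * (vec_index v 0 - vec_index v 1)\<^sup>2 + w 1 * (vec_index v 0 - vec_index v 2)\<^sup>2
       + w 0 * (vec_index v 1 - vec_index v 2)\<^sup>2)"
  using assms
  by (simp add: tri_laplacian_mult_vec scalar_prod_def sum_atLeast0_lessThan_3 tri_laplacian_index
      tri_laplacian_index[simplified] power2_eq_square algebra_simps)

lemma tri_laplacian_mult_one: "tri_laplacian w *\<^sub>v Matrix.vec 3 (\<lambda>_. 1) = 0\<^sub>v 3"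
  by (rule eq_vecI)
    (auto dest!: less_3_cases simp: tri_laplacian_mult_vec tri_laplacian_index tri_laplacian_index[simplified])

lemma tri_laplacian_eigenvector: "eigenvector (tri_laplacian w) (Matrix.vec 3 (\<lambda>_. 1)) 0"
proof -
  have "vec_index (Matrix.vec 3 (\<lambda>_. 1::real)) 0 \<noteq> vec_index (0\<^sub>v 3) 0"
    by simp
  then have "Matrix.vec 3 (\<lambda>_. 1::real) \<noteq> 0\<^sub>v 3"
    by metis
  then show ?thesis
    using tri_laplacian_carrier[of w]
    by (auto simp: eigenvector_def tri_laplacian_mult_one)
qed

lemma tri_laplacian_char_poly:
  "char_poly (tri_laplacian w) =
     [:0, 1:] * [:3 * (w 0 * w 1 + w 1 * w 2 + w 2 * w 0), 2 * (w 0 + w 1 + w 2), 1:]"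
proof -
  have entry: "char_poly_matrix (tri_laplacian w) $$ (i,j) =
      (if i = j then [:0,1:] else 0) + [: - (tri_laplacian w $$ (i,j)) :]" if "i < 3" "j < 3" for i j
    using that tri_laplacian_carrier[of w] by (auto simp: char_poly_matrix_def)
  show ?thesis
    unfolding char_poly_def
    by (subst det_3x3, use tri_laplacian_carrier[of w] in simp)
      (simp add: entry tri_laplacian_index tri_laplacian_index[simplified] algebra_simps)
qed

context
  fixes w :: "nat \<Rightarrow> real"
  assumes sigma2_pos: "w 0 * w 1 + w 1 * w 2 + w 2 * w 0 > 0"
    and sigma1_pos: "w 0 + w 1 + w 2 > 0"
begin

lemma tri_laplacian_quadratic_form_neg:
  assumes "v \<in> carrier_vec 3" and "vec_index v 1 \<noteq> vec_index v 0 \<or> vec_index v 2 \<noteq> vec_index v 0"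
  shows "v \<bullet> (tri_laplacian w *\<^sub>v v) < 0"
proof -
  have "w 2 * (vec_index v 0 - vec_index v 1)\<^sup>2 + w 1 * (vec_index v 0 - vec_index v 2)\<^sup>2
        + w 0 * ((vec_index v 0 - vec_index v 2) - (vec_index v 0 - vec_index v 1))\<^sup>2 > 0"
    using assms(2) by (intro weighted_squares_pos) (use sigma2_pos sigma1_pos in \<open>auto simp: algebra_simps\<close>)
  then show ?thesis
    using assms(1) by (simp add: tri_laplacian_quadratic_form)
qed

lemma tri_laplacian_nonpos: "v \<in> carrier_vec 3 \<Longrightarrow> v \<bullet> (tri_laplacian w *\<^sub>v v) \<le> 0"
  using tri_laplacian_quadratic_form_neg[of v] by (fastforce simp: tri_laplacian_quadratic_form)

lemma tri_laplacian_kernel: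
  "{v \<in> carrier_vec 3. tri_laplacian w *\<^sub>v v = 0\<^sub>v 3} = {c \<cdot>\<^sub>v Matrix.vec 3 (\<lambda>_. 1) | c. True}"
proof (intro equalityI subsetI)
  fix v assume "v \<in> {v \<in> carrier_vec 3. tri_laplacian w *\<^sub>v v = 0\<^sub>v 3}"
  then have v: "v \<in> carrier_vec 3" and "v \<bullet> (tri_laplacian w *\<^sub>v v) = 0"
    by auto
  then have "vec_index v 1 = vec_index v 0" "vec_index v 2 = vec_index v 0"
    using tri_laplacian_quadratic_form_neg by fastforce+
  then have "v = vec_index v 0 \<cdot>\<^sub>v Matrix.vec 3 (\<lambda>_. 1)"
    using v by (intro eq_vecI) (auto dest!: less_3_cases)
  then show "v \<in> {c \<cdot>\<^sub>v Matrix.vec 3 (\<lambda>_. 1) | c. True}"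
    by blast
next
  fix v assume "v \<in> {c \<cdot>\<^sub>v Matrix.vec 3 (\<lambda>_. 1::real) | c. True}"
  then obtain c where c: "v = c \<cdot>\<^sub>v Matrix.vec 3 (\<lambda>_. 1)"
    by blast
  have "tri_laplacian w *\<^sub>v v = c \<cdot>\<^sub>v (tri_laplacian w *\<^sub>v Matrix.vec 3 (\<lambda>_. 1))"
    unfolding c by (rule mult_mat_vec[OF tri_laplacian_carrier]) simp
  also have "\<dots> = 0\<^sub>v 3"
    by (intro eq_vecI) (simp_all add: tri_laplacian_mult_one)
  finally show "v \<in> {v \<in> carrier_vec 3. tri_laplacian w *\<^sub>v v = 0\<^sub>v 3}"
    using c by simp
qed

lemma tri_laplacian_char_poly_neg_roots:
  "\<exists>a b. a < 0 \<and> b < 0 \<and> char_poly (tri_laplacian w) = [:0, 1:] * [:- a, 1:] * [:- b, 1:]"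
proof -
  have "3 * (w 0 * w 1 + w 1 * w 2 + w 2 * w 0) \<le> (w 0 + w 1 + w 2)\<^sup>2"
    using sum_squares_ge_zero[of "w 0 - w 1" "w 1 - w 2"]
      zero_le_power2[of "w 2 - w 0"] by (simp add: power2_eq_square algebra_simps)
  then obtain a b where "a < 0" "b < 0"
    "[:3 * (w 0 * w 1 + w 1 * w 2 + w 2 * w 0), 2 * (w 0 + w 1 + w 2), 1:] = [:- a, 1:] * [:- b, 1:]"
    using quadratic_neg_roots sigma2_pos sigma1_pos by (metis mult_pos_pos zero_less_numeral)
  then show ?thesis
    by (intro exI[of _ a] exI[of _ b]) (simp add: tri_laplacian_char_poly mult.assoc)
qed

end

section \<open>Derivatives of the angles\<close>

text \<open>\<open>inv_dist I12 I23 I31 i\<close> is the parameter \<open>I\<close> of the edge opposite vertex \<open>i\<close>, so that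
  \<open>sq_len I r i\<close> is \<open>l\<^sub>i\<^sup>2\<close>.\<close>

definition inv_dist :: "real \<Rightarrow> real \<Rightarrow> real \<Rightarrow> nat \<Rightarrow> real" where
  "inv_dist I12 I23 I31 i = (if i = 0 then I23 else if i = 1 then I31 else I12)"

definition sq_len :: "(nat \<Rightarrow> real) \<Rightarrow> (nat \<Rightarrow> real) \<Rightarrow> nat \<Rightarrow> real" where
  "sq_len I r i = (r ((i + 1) mod 3))\<^sup>2 + (r ((i + 2) mod 3))\<^sup>2
     + 2 * I i * r ((i + 1) mod 3) * r ((i + 2) mod 3)"

text \<open>Sixteen times the squared area of the triangle with side lengths \<open>sqrt (sq_len I r i)\<close>.\<close>

definition heron_form :: "(nat \<Rightarrow> real) \<Rightarrow> (nat \<Rightarrow> real) \<Rightarrow> real" where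
  "heron_form I r = (let L = sq_len I r in
     2 * L 0 * L 1 + 2 * L 1 * L 2 + 2 * L 2 * L 0 - (L 0)\<^sup>2 - (L 1)\<^sup>2 - (L 2)\<^sup>2)"

lemma inv_dist_nonneg:
  "I12 \<ge> 0 \<Longrightarrow> I23 \<ge> 0 \<Longrightarrow> I31 \<ge> 0 \<Longrightarrow> inv_dist I12 I23 I31 i \<ge> 0"
  by (simp add: inv_dist_def)

lemma sq_len_pos:
  assumes "I i \<ge> 0" and "\<And>k. r k > 0"
  shows "sq_len I r i > 0"
proof -
  have "0 \<le> 2 * I i * r ((i + 1) mod 3) * r ((i + 2) mod 3)"
    using assms by (simp add: less_imp_le)
  moreover have "(r ((i + 1) mod 3))\<^sup>2 > 0"
    using assms(2)[of "(i + 1) mod 3"] by simp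
  ultimately show ?thesis
    unfolding sq_len_def using zero_le_power2[of "r ((i + 2) mod 3)"] by linarith
qed

lemma edge_len_eq_sqrt_sq_len:
  "i < 3 \<Longrightarrow> edge_len I12 I23 I31 u i = sqrt (sq_len (inv_dist I12 I23 I31) (\<lambda>k. exp (u k)) i)"
  by (auto dest!: less_3_cases simp: edge_len_def sq_len_def inv_dist_def numeral_2_eq_2)

lemma tri_angle_eq_arccos:
  fixes I12 I23 I31 :: real and u :: "nat \<Rightarrow> real"
  defines "L \<equiv> sq_len (inv_dist I12 I23 I31) (\<lambda>k. exp (u k))"
  assumes "I12 \<ge> 0" and "I23 \<ge> 0" and "I31 \<ge> 0" and "i < 3"
  shows "tri_angle I12 I23 I31 u i =
    arccos ((L ((i + 1) mod 3) + L ((i + 2) mod 3) - L i)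
            / (2 * sqrt (L ((i + 1) mod 3)) * sqrt (L ((i + 2) mod 3))))"
proof -
  have "L n > 0" for n
    unfolding L_def by (rule sq_len_pos) (simp_all add: assms inv_dist_nonneg)
  then show ?thesis
    using assms(5) by (simp add: tri_angle_def Let_def L_def edge_len_eq_sqrt_sq_len less_imp_le)
qed

lemma heron_identity:
  fixes a b c :: real
  shows "2 * a\<^sup>2 * b\<^sup>2 + 2 * b\<^sup>2 * c\<^sup>2 + 2 * c\<^sup>2 * a\<^sup>2 - (a\<^sup>2)\<^sup>2 - (b\<^sup>2)\<^sup>2 - (c\<^sup>2)\<^sup>2
    = (a + b + c) * (- a + b + c) * (a - b + c) * (a + b - c)"
  by (simp add: power2_eq_square algebra_simps)

lemma heron_form_pos:
  assumes "u \<in> U_E I12 I23 I31"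
  shows "heron_form (inv_dist I12 I23 I31) (\<lambda>k. exp (u k)) > 0"
proof -
  define l where "l = edge_len I12 I23 I31 u"
  have tri: "l 0 > 0" "l 1 > 0" "l 2 > 0" "l 0 < l 1 + l 2" "l 1 < l 2 + l 0" "l 2 < l 0 + l 1"
    using assms by (auto simp: U_E_def l_def Let_def)
  have L: "sq_len (inv_dist I12 I23 I31) (\<lambda>k. exp (u k)) n = (l n)\<^sup>2" if "n < 3" for n
  proof -
    have "l n > 0"
      using tri that by (auto dest!: less_3_cases)
    then show ?thesis
      using that by (simp add: l_def edge_len_eq_sqrt_sq_len)
  qed
  have "heron_form (inv_dist I12 I23 I31) (\<lambda>k. exp (u k))
      = 2 * (l 0)\<^sup>2 * (l 1)\<^sup>2 + 2 * (l 1)\<^sup>2 * (l 2)\<^sup>2 + 2 * (l 2)\<^sup>2 * (l 0)\<^sup>2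
        - ((l 0)\<^sup>2)\<^sup>2 - ((l 1)\<^sup>2)\<^sup>2 - ((l 2)\<^sup>2)\<^sup>2"
    by (simp add: heron_form_def Let_def L)
  also have "\<dots> = (l 0 + l 1 + l 2) * (- l 0 + l 1 + l 2) * (l 0 - l 1 + l 2) * (l 0 + l 1 - l 2)"
    by (rule heron_identity)
  also have "\<dots> > 0"
    using tri by (intro mult_pos_pos) auto
  finally show ?thesis .
qed

lemma heron_form_cyclic:
  assumes "i < 3"
  shows "4 * sq_len I r ((i + 1) mod 3) * sq_len I r ((i + 2) mod 3)
     - (sq_len I r ((i + 1) mod 3) + sq_len I r ((i + 2) mod 3) - sq_len I r i)\<^sup>2 = heron_form I r"
proof -
  have "4 * sq_len I r 1 * sq_len I r 2 - (sq_len I r 1 + sq_len I r 2 - sq_len I r 0)\<^sup>2 = heron_form I r"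
    "4 * sq_len I r 2 * sq_len I r 0 - (sq_len I r 2 + sq_len I r 0 - sq_len I r 1)\<^sup>2 = heron_form I r"
    "4 * sq_len I r 0 * sq_len I r 1 - (sq_len I r 0 + sq_len I r 1 - sq_len I r 2)\<^sup>2 = heron_form I r"
    by (simp_all add: heron_form_def Let_def power2_eq_square algebra_simps)
  with assms show ?thesis
    by (auto dest!: less_3_cases simp: numeral_2_eq_2)
qed

lemma has_real_derivative_arccos_cosine_law:
  fixes A B C :: "real \<Rightarrow> real"
  assumes dA: "(A has_real_derivative A') (at t)" and dB: "(B has_real_derivative B') (at t)"
    and dC: "(C has_real_derivative C') (at t)"
    and A_pos: "A t > 0" and B_pos: "B t > 0" and area_pos: "4 * A t * B t - (A t + B t - C t)\<^sup>2 > 0"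
  shows "((\<lambda>t. arccos ((A t + B t - C t) / (2 * sqrt (A t) * sqrt (B t)))) has_real_derivative
    - (2 * (A' + B' - C') * A t * B t - (A t + B t - C t) * (A' * B t + A t * B'))
      / (2 * A t * B t * sqrt (4 * A t * B t - (A t + B t - C t)\<^sup>2))) (at t)"
proof -
  define a b N where "a = sqrt (A t)" and "b = sqrt (B t)" and "N = A t + B t - C t"
  define s where "s = sqrt (4 * A t * B t - N\<^sup>2)"
  define x where "x = N / (2 * a * b)"
  have ab: "a > 0" "b > 0" "A t = a\<^sup>2" "B t = b\<^sup>2"
    using A_pos B_pos by (simp_all add: a_def b_def)
  have s: "s > 0"
    using area_pos by (simp add: s_def N_def)
  have sqrt_x: "sqrt (1 - x\<^sup>2) = s / (2 * a * b)"
  proof -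
    have "1 - x\<^sup>2 = (4 * A t * B t - N\<^sup>2) / (2 * a * b)\<^sup>2"
      using ab by (simp add: x_def field_simps power2_eq_square)
    then show ?thesis
      using ab by (simp add: s_def real_sqrt_divide)
  qed
  then have "sqrt (1 - x\<^sup>2) > 0"
    using ab s by simp
  then have "\<bar>x\<bar> < 1"
    by (simp add: abs_square_less_1)
  then have "(arccos has_real_derivative inverse (- sqrt (1 - x\<^sup>2))) (at x)"
    by (intro DERIV_arccos) auto
  moreover have "(A t + B t - C t) / (2 * sqrt (A t) * sqrt (B t)) = x"
    by (simp add: x_def N_def a_def b_def)
  ultimately have arccos: "(arccos has_real_derivative inverse (- sqrt (1 - x\<^sup>2)))
      (at ((A t + B t - C t) / (2 * sqrt (A t) * sqrt (B t))))"
    by simp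
  have quot: "((\<lambda>t. (A t + B t - C t) / (2 * sqrt (A t) * sqrt (B t))) has_real_derivative
     ((A' + B' - C') * (2 * a * b) - N * (2 * (inverse a / 2 * A') * b + 2 * a * (inverse b / 2 * B')))
     / (2 * a * b)\<^sup>2) (at t)"
    by (rule DERIV_chain2[OF DERIV_real_sqrt[OF A_pos] dA] DERIV_chain2[OF DERIV_real_sqrt[OF B_pos] dB]
        dA dB dC derivative_eq_intros refl)+
      (use ab(1,2) in \<open>auto simp: a_def b_def N_def power2_eq_square algebra_simps\<close>)
  have "inverse (- sqrt (1 - x\<^sup>2)) * (((A' + B' - C') * (2 * a * b)
       - N * (2 * (inverse a / 2 * A') * b + 2 * a * (inverse b / 2 * B'))) / (2 * a * b)\<^sup>2)
    = - (2 * (A' + B' - C') * A t * B t - N * (A' * B t + A t * B')) / (2 * A t * B t * s)"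
    unfolding sqrt_x using ab s by (simp add: field_simps power2_eq_square)
  with DERIV_chain2[OF arccos quot] show ?thesis
    unfolding s_def N_def by (simp only:)
qed

text \<open>\<open>sq_len_partial I r i m\<close> is \<open>\<partial>L\<^sub>i/\<partial>u\<^sub>m\<close>; the auxiliary \<open>d n\<close> is \<open>\<partial>r\<^sub>n/\<partial>u\<^sub>m\<close>.\<close>

definition sq_len_partial :: "(nat \<Rightarrow> real) \<Rightarrow> (nat \<Rightarrow> real) \<Rightarrow> nat \<Rightarrow> nat \<Rightarrow> real" where
  "sq_len_partial I r i m =
     (let d = (\<lambda>n. if n = m then r n else 0); j = (i + 1) mod 3; k = (i + 2) mod 3 in
      2 * r j * d j + 2 * r k * d k + 2 * I i * (d j * r k + r j * d k))"

lemma sq_len_has_derivative: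
  "((\<lambda>t. sq_len I (\<lambda>k. exp ((u(m := t)) k)) i) has_real_derivative
     sq_len_partial I (\<lambda>k. exp (u k)) i m) (at (u m))"
proof -
  have exp_upd: "((\<lambda>t. exp ((u(m := t)) k)) has_real_derivative (if k = m then exp (u k) else 0)) (at (u m))"
    for k
    by (cases "k = m") (simp_all add: DERIV_exp)
  show ?thesis
    unfolding sq_len_def sq_len_partial_def Let_def
    by (rule exp_upd derivative_eq_intros refl)+ (simp add: algebra_simps)
qed

definition angle_partial_num :: "(nat \<Rightarrow> real) \<Rightarrow> (nat \<Rightarrow> real) \<Rightarrow> nat \<Rightarrow> nat \<Rightarrow> real" where
  "angle_partial_num I r i m =
     (let L = sq_len I r; L' = (\<lambda>n. sq_len_partial I r n m); j = (i + 1) mod 3; k = (i + 2) mod 3 in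
      2 * (L' j + L' k - L' i) * L j * L k - (L j + L k - L i) * (L' j * L k + L j * L' k))"

lemma tri_angle_has_derivative:
  fixes I12 I23 I31 :: real and u :: "nat \<Rightarrow> real"
  defines "I \<equiv> inv_dist I12 I23 I31" and "r \<equiv> \<lambda>k. exp (u k)"
  assumes "I12 \<ge> 0" and "I23 \<ge> 0" and "I31 \<ge> 0" and D: "heron_form I r > 0" and i: "i < 3"
  shows "((\<lambda>t. tri_angle I12 I23 I31 (u(m := t)) i) has_real_derivative
    - angle_partial_num I r i m
      / (2 * sq_len I r ((i + 1) mod 3) * sq_len I r ((i + 2) mod 3) * sqrt (heron_form I r))) (at (u m))"
proof -
  define j k where "j = (i + 1) mod 3" and "k = (i + 2) mod 3"
  define L where "L = (\<lambda>n t. sq_len I (\<lambda>k. exp ((u(m := t)) k)) n)"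
  have L_at: "L n (u m) = sq_len I r n" for n
    by (simp add: L_def r_def del: fun_upd_apply)
  have L_pos: "sq_len I r n > 0" for n
    by (rule sq_len_pos) (simp_all add: I_def r_def assms inv_dist_nonneg)
  have dL: "(L n has_real_derivative sq_len_partial I r n m) (at (u m))" for n
    unfolding L_def r_def by (rule sq_len_has_derivative)
  have angle: "(\<lambda>t. tri_angle I12 I23 I31 (u(m := t)) i)
      = (\<lambda>t. arccos ((L j t + L k t - L i t) / (2 * sqrt (L j t) * sqrt (L k t))))"
    using tri_angle_eq_arccos[OF assms(3-5) i] by (simp add: L_def I_def j_def k_def)
  have "((\<lambda>t. arccos ((L j t + L k t - L i t) / (2 * sqrt (L j t) * sqrt (L k t)))) has_real_derivative
    - (2 * (sq_len_partial I r j m + sq_len_partial I r k m - sq_len_partial I r i m) * L j (u m) * L k (u m)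
       - (L j (u m) + L k (u m) - L i (u m))
         * (sq_len_partial I r j m * L k (u m) + L j (u m) * sq_len_partial I r k m))
      / (2 * L j (u m) * L k (u m) * sqrt (4 * L j (u m) * L k (u m) - (L j (u m) + L k (u m) - L i (u m))\<^sup>2)))
    (at (u m))"
    by (rule has_real_derivative_arccos_cosine_law[OF dL dL dL])
      (simp_all only: L_at L_pos j_def k_def heron_form_cyclic[OF i] D)
  moreover have "angle_partial_num I r i m
    = 2 * (sq_len_partial I r j m + sq_len_partial I r k m - sq_len_partial I r i m) * sq_len I r j * sq_len I r k
      - (sq_len I r j + sq_len I r k - sq_len I r i)
        * (sq_len_partial I r j m * sq_len I r k + sq_len I r j * sq_len_partial I r k m)"
    by (simp only: angle_partial_num_def Let_def j_def k_def)
  ultimately show ?thesis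
    unfolding angle L_at j_def k_def heron_form_cyclic[OF i] by (simp only:)
qed

definition weight_factor :: "(nat \<Rightarrow> real) \<Rightarrow> (nat \<Rightarrow> real) \<Rightarrow> nat \<Rightarrow> real" where
  "weight_factor I r k = (let i = (k + 1) mod 3; j = (k + 2) mod 3 in
     r i * r j * (1 - (I k)\<^sup>2) + r i * r k * (I i + I j * I k) + r j * r k * (I j + I i * I k))"

definition weight_num :: "(nat \<Rightarrow> real) \<Rightarrow> (nat \<Rightarrow> real) \<Rightarrow> nat \<Rightarrow> real" where
  "weight_num I r k = 2 * r ((k + 1) mod 3) * r ((k + 2) mod 3) * weight_factor I r k"

definition angle_weight :: "(nat \<Rightarrow> real) \<Rightarrow> (nat \<Rightarrow> real) \<Rightarrow> nat \<Rightarrow> real" where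
  "angle_weight I r k = weight_num I r k / (sq_len I r k * sqrt (heron_form I r))"

lemma angle_partial_num_eq:
  assumes "i < 3" and "m < 3"
  shows "angle_partial_num I r i m =
    (if m = i then 2 * (sq_len I r ((i + 1) mod 3) * weight_num I r ((i + 2) mod 3)
                        + sq_len I r ((i + 2) mod 3) * weight_num I r ((i + 1) mod 3))
     else - 2 * sq_len I r m * weight_num I r (3 - i - m))"
  using less_3_cases[OF assms(1)] less_3_cases[OF assms(2)]
  by (elim disjE; hypsubst; simp add: angle_partial_num_def sq_len_partial_def sq_len_def
      weight_num_def weight_factor_def Let_def numeral_2_eq_2 power2_eq_square algebra_simps)

lemma angle_partial_eq_tri_laplacian:
  assumes L: "\<And>n. sq_len I r n > 0" and D: "heron_form I r > 0" and "i < 3" and "m < 3"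
  shows "- angle_partial_num I r i m
      / (2 * sq_len I r ((i + 1) mod 3) * sq_len I r ((i + 2) mod 3) * sqrt (heron_form I r))
    = tri_laplacian (angle_weight I r) $$ (i, m)"
proof -
  have "sqrt (heron_form I r) > 0"
    using D by simp
  with less_3_cases[OF assms(3)] less_3_cases[OF assms(4)] L[of 0] L[of 1] L[of 2] show ?thesis
    by (elim disjE; hypsubst;
        simp add: angle_partial_num_eq angle_weight_def tri_laplacian_def numeral_2_eq_2 field_simps)
qed

lemma angle_jacobian_eq_tri_laplacian:
  assumes "I12 \<ge> 0" and "I23 \<ge> 0" and "I31 \<ge> 0" and "u \<in> U_E I12 I23 I31"
  shows "angle_jacobian I12 I23 I31 u = tri_laplacian (angle_weight (inv_dist I12 I23 I31) (\<lambda>k. exp (u k)))"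
proof (rule eq_matI)
  fix i m
  assume "i < dim_row (tri_laplacian (angle_weight (inv_dist I12 I23 I31) (\<lambda>k. exp (u k))))"
    and "m < dim_col (tri_laplacian (angle_weight (inv_dist I12 I23 I31) (\<lambda>k. exp (u k))))"
  then have im: "i < 3" "m < 3"
    by (simp_all add: tri_laplacian_def)
  have L: "sq_len (inv_dist I12 I23 I31) (\<lambda>k. exp (u k)) n > 0" for n
    by (rule sq_len_pos) (simp_all add: assms inv_dist_nonneg)
  note D = heron_form_pos[OF assms(4)]
  have "deriv (\<lambda>t. tri_angle I12 I23 I31 (u(m := t)) i) (u m)
      = tri_laplacian (angle_weight (inv_dist I12 I23 I31) (\<lambda>k. exp (u k))) $$ (i, m)"
    by (rule trans[OF DERIV_imp_deriv[OF tri_angle_has_derivative[OF assms(1-3) D im(1)]]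
          angle_partial_eq_tri_laplacian[OF L D im]])
  then show "angle_jacobian I12 I23 I31 u $$ (i, m)
      = tri_laplacian (angle_weight (inv_dist I12 I23 I31) (\<lambda>k. exp (u k))) $$ (i, m)"
    using im by (simp add: angle_jacobian_def)
qed (simp_all add: angle_jacobian_def tri_laplacian_def)

section \<open>Positivity of the weights\<close>

text \<open>Two of the \<open>weight_factor I r k\<close> cannot both be nonpositive: that would force
  \<open>a\<^sup>2 \<ge> 1\<close>, \<open>b\<^sup>2 \<ge> 1\<close> and \<open>(a\<^sup>2 - 1)(b\<^sup>2 - 1) \<ge> (c + ab)\<^sup>2\<close>, i.e.
  \<open>a\<^sup>2 + b\<^sup>2 + c\<^sup>2 + 2abc \<le> 1\<close>.\<close>

lemma weight_factors_not_both_nonpos: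
  fixes x y z a b c :: real
  assumes pos: "x > 0" "y > 0" "z > 0" and nonneg: "a \<ge> 0" "b \<ge> 0" "c \<ge> 0"
    and A: "y * z * (1 - a\<^sup>2) + y * x * (b + c * a) + z * x * (c + b * a) \<le> 0"
    and B: "z * x * (1 - b\<^sup>2) + z * y * (c + a * b) + x * y * (a + c * b) \<le> 0"
  shows False
proof -
  have cross: "z * x * (c + a * b) \<ge> 0" "z * y * (c + a * b) \<ge> 0"
    and other: "y * x * (b + c * a) \<ge> 0" "x * y * (a + c * b) \<ge> 0"
    using pos nonneg by simp_all
  have A': "y * z * (a\<^sup>2 - 1) \<ge> z * x * (c + a * b)"
    using A other(1) by (simp add: algebra_simps)
  have B': "z * x * (b\<^sup>2 - 1) \<ge> z * y * (c + a * b)"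
    using B other(2) by (simp add: algebra_simps)
  have "y * z * (a\<^sup>2 - 1) \<ge> 0" "z * x * (b\<^sup>2 - 1) \<ge> 0"
    using A' B' cross by linarith+
  then have "a\<^sup>2 \<ge> 1" "b\<^sup>2 \<ge> 1"
    using mult_pos_pos[OF pos(2,3)] mult_pos_pos[OF pos(3,1)] by (auto simp: zero_le_mult_iff)
  moreover have "(y * z * (a\<^sup>2 - 1)) * (z * x * (b\<^sup>2 - 1)) \<ge> (z * x * (c + a * b)) * (z * y * (c + a * b))"
    by (rule mult_mono[OF A' B']) (use cross A' in linarith)+
  then have "(x * y * z * z) * ((c + a * b)\<^sup>2) \<le> (x * y * z * z) * ((a\<^sup>2 - 1) * (b\<^sup>2 - 1))"
    by (simp add: power2_eq_square algebra_simps)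
  then have "(c + a * b)\<^sup>2 \<le> (a\<^sup>2 - 1) * (b\<^sup>2 - 1)"
    using pos by (simp add: mult_le_cancel_left_pos)
  then have "a\<^sup>2 + b\<^sup>2 + c\<^sup>2 + 2 * a * b * c \<le> 1"
    by (simp add: power2_eq_square algebra_simps)
  moreover have "c\<^sup>2 + 2 * a * b * c \<ge> 0"
    using nonneg by simp
  ultimately show False
    using \<open>a\<^sup>2 \<ge> 1\<close> \<open>b\<^sup>2 \<ge> 1\<close> by linarith
qed

lemma sum_pos_of_sigma2_pos:
  fixes e f g :: real
  assumes "e * f + f * g + g * e > 0" and "e > 0 \<or> f > 0" and "f > 0 \<or> g > 0" and "g > 0 \<or> e > 0"
  shows "e + f + g > 0"
  using assms by (smt (verit, best) mult.commute distrib_left zero_le_mult_iff)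

lemma weight_factor_simps:
  "weight_factor I r 0 = r 1 * r 2 * (1 - (I 0)\<^sup>2) + r 1 * r 0 * (I 1 + I 2 * I 0) + r 2 * r 0 * (I 2 + I 1 * I 0)"
  "weight_factor I r 1 = r 2 * r 0 * (1 - (I 1)\<^sup>2) + r 2 * r 1 * (I 2 + I 0 * I 1) + r 0 * r 1 * (I 0 + I 2 * I 1)"
  "weight_factor I r 2 = r 0 * r 1 * (1 - (I 2)\<^sup>2) + r 0 * r 2 * (I 0 + I 1 * I 2) + r 1 * r 2 * (I 1 + I 0 * I 2)"
  by (simp_all add: weight_factor_def numeral_2_eq_2)

context
  fixes I r :: "nat \<Rightarrow> real"
  assumes I_nonneg: "\<And>k. I k \<ge> 0" and r_pos: "\<And>k. r k > 0" and heron_pos: "heron_form I r > 0"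
begin

lemma weight_num_sigma2_pos:
  "weight_num I r 0 * weight_num I r 1 * sq_len I r 2 + weight_num I r 1 * weight_num I r 2 * sq_len I r 0
   + weight_num I r 2 * weight_num I r 0 * sq_len I r 1 > 0"
proof -
  define H where "H = (r 0)\<^sup>2 * r 1 * (I 1 + I 0 * I 2) + (r 0)\<^sup>2 * r 2 * (I 2 + I 0 * I 1)
      + (r 1)\<^sup>2 * r 0 * (I 0 + I 1 * I 2) + (r 1)\<^sup>2 * r 2 * (I 2 + I 0 * I 1)
      + (r 2)\<^sup>2 * r 0 * (I 0 + I 1 * I 2) + (r 2)\<^sup>2 * r 1 * (I 1 + I 0 * I 2)
      + 2 * r 0 * r 1 * r 2 * (1 + I 0 * I 1 * I 2)"
  have "weight_num I r 0 * weight_num I r 1 * sq_len I r 2 + weight_num I r 1 * weight_num I r 2 * sq_len I r 0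
      + weight_num I r 2 * weight_num I r 0 * sq_len I r 1 = r 0 * r 1 * r 2 * heron_form I r * H"
    by (simp add: H_def weight_num_def weight_factor_def heron_form_def sq_len_def numeral_2_eq_2
        power2_eq_square algebra_simps)
  moreover have "H > 0"
    unfolding H_def using I_nonneg r_pos
    by (intro add_nonneg_pos add_nonneg_nonneg mult_nonneg_nonneg mult_pos_pos add_pos_nonneg)
      (simp_all add: less_imp_le)
  ultimately show ?thesis
    using r_pos heron_pos by simp
qed

lemma angle_weight_sigma2_pos:
  "angle_weight I r 0 * angle_weight I r 1 + angle_weight I r 1 * angle_weight I r 2
   + angle_weight I r 2 * angle_weight I r 0 > 0"
proof -
  define L s where "L = sq_len I r" and "s = sqrt (heron_form I r)"
  have L: "L n > 0" for n
    unfolding L_def using I_nonneg r_pos by (rule sq_len_pos)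
  have s: "s > 0" "s\<^sup>2 = heron_form I r"
    using heron_pos by (simp_all add: s_def)
  have "angle_weight I r 0 * angle_weight I r 1 + angle_weight I r 1 * angle_weight I r 2
     + angle_weight I r 2 * angle_weight I r 0
     = (weight_num I r 0 * weight_num I r 1 * L 2 + weight_num I r 1 * weight_num I r 2 * L 0
        + weight_num I r 2 * weight_num I r 0 * L 1) / (L 0 * L 1 * L 2 * s\<^sup>2)"
    using L[of 0] L[of 1] L[of 2] s(1)
    by (simp add: angle_weight_def L_def[symmetric] s_def[symmetric] field_simps power2_eq_square)
  also have "\<dots> > 0"
    using weight_num_sigma2_pos L heron_pos unfolding L_def
    by (intro divide_pos_pos mult_pos_pos) (simp_all add: s)
  finally show ?thesis .
qed

lemma weight_factor_nonpos:
  assumes "angle_weight I r n \<le> 0"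
  shows "weight_factor I r n \<le> 0"
proof -
  have "sq_len I r n * sqrt (heron_form I r) > 0"
    using sq_len_pos[OF I_nonneg r_pos] heron_pos by simp
  then have "2 * r ((n + 1) mod 3) * r ((n + 2) mod 3) * weight_factor I r n \<le> 0"
    using assms by (simp add: angle_weight_def weight_num_def divide_le_0_iff)
  moreover have "2 * r ((n + 1) mod 3) * r ((n + 2) mod 3) > 0"
    using r_pos by simp
  ultimately show ?thesis
    using mult_le_cancel_left_pos[of "2 * r ((n + 1) mod 3) * r ((n + 2) mod 3)" "weight_factor I r n" 0]
    by simp
qed

lemma angle_weight_pos_pairs:
  "angle_weight I r 0 > 0 \<or> angle_weight I r 1 > 0"
  "angle_weight I r 1 > 0 \<or> angle_weight I r 2 > 0"
  "angle_weight I r 2 > 0 \<or> angle_weight I r 0 > 0"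
proof -
  have "\<not> (weight_factor I r 0 \<le> 0 \<and> weight_factor I r 1 \<le> 0)"
    "\<not> (weight_factor I r 1 \<le> 0 \<and> weight_factor I r 2 \<le> 0)"
    "\<not> (weight_factor I r 2 \<le> 0 \<and> weight_factor I r 0 \<le> 0)"
    unfolding weight_factor_simps using r_pos I_nonneg
      weight_factors_not_both_nonpos[of "r 0" "r 1" "r 2" "I 0" "I 1" "I 2"]
      weight_factors_not_both_nonpos[of "r 1" "r 2" "r 0" "I 1" "I 2" "I 0"]
      weight_factors_not_both_nonpos[of "r 2" "r 0" "r 1" "I 2" "I 0" "I 1"]
    by blast+
  then show "angle_weight I r 0 > 0 \<or> angle_weight I r 1 > 0"
    "angle_weight I r 1 > 0 \<or> angle_weight I r 2 > 0"
    "angle_weight I r 2 > 0 \<or> angle_weight I r 0 > 0"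
    using weight_factor_nonpos[of 0] weight_factor_nonpos[of 1] weight_factor_nonpos[of 2] by linarith+
qed

lemma angle_weight_sum_pos: "angle_weight I r 0 + angle_weight I r 1 + angle_weight I r 2 > 0"
  by (rule sum_pos_of_sigma2_pos[OF angle_weight_sigma2_pos angle_weight_pos_pairs])

end

theorem lemma2p4:
  fixes I12 I23 I31 :: real and u :: "nat \<Rightarrow> real"
  assumes "I12 \<ge> 0" and "I23 \<ge> 0" and "I31 \<ge> 0"
    and "u \<in> U_E I12 I23 I31"
  shows "let J = angle_jacobian I12 I23 I31 u; one = vec 3 (\<lambda>_. 1) in
           eigenvector J one 0 \<and>
           (\<exists>a b. a < 0 \<and> b < 0 \<and> char_poly J = [:0, 1:] * [:- a, 1:] * [:- b, 1:]) \<and>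
           (\<forall>v \<in> carrier_vec 3. v \<bullet> (J *\<^sub>v v) \<le> 0) \<and>
           {v \<in> carrier_vec 3. J *\<^sub>v v = 0\<^sub>v 3} = {c \<cdot>\<^sub>v one | c. True}"
proof -
  define w where "w = angle_weight (inv_dist I12 I23 I31) (\<lambda>k. exp (u k))"
  have I: "\<And>k. inv_dist I12 I23 I31 k \<ge> 0"
    using assms(1-3) by (rule inv_dist_nonneg)
  have r: "\<And>k. exp (u k) > 0"
    by simp
  note D = heron_form_pos[OF assms(4)]
  have sigma2: "w 0 * w 1 + w 1 * w 2 + w 2 * w 0 > 0"
    unfolding w_def by (rule angle_weight_sigma2_pos[OF I r D])
  have sigma1: "w 0 + w 1 + w 2 > 0"
    unfolding w_def by (rule angle_weight_sum_pos[OF I r D])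
  show ?thesis
    unfolding Let_def angle_jacobian_eq_tri_laplacian[OF assms] w_def[symmetric]
    using tri_laplacian_eigenvector tri_laplacian_char_poly_neg_roots[OF sigma2 sigma1]
      tri_laplacian_nonpos[OF sigma2 sigma1] tri_laplacian_kernel[OF sigma2 sigma1]
    by blast
qed

end
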